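(* Let $\kappa=(\xi,\eta)\in S\mathbb{H}$, regarded as a $2\times1$ column vector, and let $\check\kappa=(\eta',-\xi')$, also regarded as a column. Then there exists a $1\times2$ row vector $\tau=(\alpha,\beta)\in\mathbb{H}^2$ such that exactly one of $\tau\kappa=\alpha\xi+\beta\eta$ and $\tau\check\kappa=\alpha\eta'-\beta\xi'$ is zero.
   Context: For $q=a+bi+cj+dk\in\mathbb{H}$, $q'=a-bi-cj+dk$, $\bar q=a-bi-cj-dk$. $\mathcal{V}=\mathrm{span}_\mathbb{R}\{1,i,j\}$. $S\mathbb{H}=\{(\xi,\eta)\in\mathbb{H}^2\setminus\{(0,0)\}:\xi\bar\eta\in\mathcal{V}\}$. *)

theory Defs
  imports Main "HOL.Real"
begin

datatype quat = Quat (Re: real) (Im1: real) (Im2: real) (Im3: real)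

instantiation quat :: "{zero, plus, minus, uminus, times}"
begin
definition "0 = Quat 0 0 0 0"
definition "p + q = Quat (Re p + Re q) (Im1 p + Im1 q) (Im2 p + Im2 q) (Im3 p + Im3 q)"
definition "p - q = Quat (Re p - Re q) (Im1 p - Im1 q) (Im2 p - Im2 q) (Im3 p - Im3 q)"
definition "- q = Quat (- Re q) (- Im1 q) (- Im2 q) (- Im3 q)"
text \<open>Hamilton product: i^2 = j^2 = k^2 = ijk = -1.\<close>
definition "p * q = Quat
   (Re p * Re q - Im1 p * Im1 q - Im2 p * Im2 q - Im3 p * Im3 q)
   (Re p * Im1 q + Im1 p * Re q + Im2 p * Im3 q - Im3 p * Im2 q)
   (Re p * Im2 q - Im1 p * Im3 q + Im2 p * Re q + Im3 p * Im1 q)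
   (Re p * Im3 q + Im1 p * Im2 q - Im2 p * Im1 q + Im3 p * Re q)"
instance ..
end

definition qcnj :: "quat \<Rightarrow> quat" where
  "qcnj q = Quat (Re q) (- Im1 q) (- Im2 q) (- Im3 q)"

definition qprime :: "quat \<Rightarrow> quat" where
  "qprime q = Quat (Re q) (- Im1 q) (- Im2 q) (Im3 q)"

definition qV :: "quat set" where
  "qV = {q. Im3 q = 0}"

definition SH :: "(quat \<times> quat) set" where
  "SH = {(\<xi>, \<eta>). (\<xi>, \<eta>) \<noteq> (0, 0) \<and> \<xi> * qcnj \<eta> \<in> qV}"

end

theory Submission
  imports Defs
begin

text \<open>
  The involution \<open>q \<mapsto> q'\<close> is conjugation by \<open>k\<close>, hence a ring automorphism, and it agrees
  with quaternion conjugation exactly on \<open>V\<close>.  So \<open>\<xi> conj \<eta> \<in> V\<close> gives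
  \<open>\<eta> conj \<xi> = conj (\<xi> conj \<eta>) = (\<xi> conj \<eta>)' = \<xi>' conj \<eta>'\<close>, hence \<open>\<eta> conj \<xi> \<eta>' = |\<eta>|\<^sup>2 \<xi>'\<close>.
  For \<open>\<xi> \<noteq> 0\<close> the row \<open>(\<alpha>, \<beta>) = (\<eta> conj \<xi>, -|\<xi>|\<^sup>2)\<close> thus kills \<open>(\<xi>, \<eta>)\<close> but sends
  \<open>(\<eta>', -\<xi>')\<close> to \<open>(|\<xi>|\<^sup>2 + |\<eta>|\<^sup>2) \<xi>' \<noteq> 0\<close>; for \<open>\<xi> = 0\<close> the row \<open>(1, 0)\<close> works.
\<close>

lemma quat_eq_iff:
  "p = q \<longleftrightarrow> Re p = Re q \<and> Im1 p = Im1 q \<and> Im2 p = Im2 q \<and> Im3 p = Im3 q"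
  by (cases p; cases q) simp

lemmas quat_defs =
  zero_quat_def plus_quat_def minus_quat_def uminus_quat_def times_quat_def

instantiation quat :: ring_1
begin

definition one_quat_def: "1 = Quat 1 0 0 0"

instance
  by standard (simp_all add: quat_eq_iff quat_defs one_quat_def algebra_simps)

end

definition quat_of_real :: "real \<Rightarrow> quat" where
  "quat_of_real r = Quat r 0 0 0"

definition qnorm2 :: "quat \<Rightarrow> real" where
  "qnorm2 q = (Re q)\<^sup>2 + (Im1 q)\<^sup>2 + (Im2 q)\<^sup>2 + (Im3 q)\<^sup>2"

lemma quat_of_real_add: "quat_of_real (r + s) = quat_of_real r + quat_of_real s"
  by (simp add: quat_of_real_def plus_quat_def)

lemma quat_of_real_commute: "quat_of_real r * q = q * quat_of_real r"
  by (simp add: quat_of_real_def times_quat_def quat_eq_iff algebra_simps)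

lemma quat_of_real_mult_eq_0_iff: "quat_of_real r * q = 0 \<longleftrightarrow> r = 0 \<or> q = 0"
  by (auto simp: quat_of_real_def times_quat_def zero_quat_def quat_eq_iff)

lemma qnorm2_nonneg: "qnorm2 q \<ge> 0"
  by (simp add: qnorm2_def)

lemma qnorm2_eq_0_iff: "qnorm2 q = 0 \<longleftrightarrow> q = 0"
  by (cases q) (simp add: qnorm2_def zero_quat_def add_nonneg_eq_0_iff)

lemma qcnj_mult_self: "qcnj q * q = quat_of_real (qnorm2 q)"
  by (simp add: qcnj_def times_quat_def quat_of_real_def qnorm2_def quat_eq_iff
      power2_eq_square algebra_simps)

lemma qcnj_qcnj [simp]: "qcnj (qcnj q) = q"
  by (simp add: qcnj_def)

lemma qcnj_mult: "qcnj (p * q) = qcnj q * qcnj p"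
  by (simp add: qcnj_def times_quat_def quat_eq_iff algebra_simps)

lemma qprime_mult: "qprime (p * q) = qprime p * qprime q"
  by (simp add: qprime_def times_quat_def quat_eq_iff algebra_simps)

lemma qprime_qcnj: "qprime (qcnj q) = qcnj (qprime q)"
  by (simp add: qprime_def qcnj_def)

lemma qprime_eq_0_iff [simp]: "qprime q = 0 \<longleftrightarrow> q = 0"
  by (auto simp: qprime_def zero_quat_def quat_eq_iff)

lemma qnorm2_qprime [simp]: "qnorm2 (qprime q) = qnorm2 q"
  by (simp add: qnorm2_def qprime_def)

lemma qprime_eq_qcnj_iff: "qprime q = qcnj q \<longleftrightarrow> q \<in> qV"
  by (auto simp: qprime_def qcnj_def qV_def)

lemma mult_qcnj_mult_qprime_eq_qnorm2:
  assumes "\<xi> * qcnj \<eta> \<in> qV"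
  shows "\<eta> * qcnj \<xi> * qprime \<eta> = quat_of_real (qnorm2 \<eta>) * qprime \<xi>"
proof -
  have "\<eta> * qcnj \<xi> = qcnj (\<xi> * qcnj \<eta>)"
    by (simp add: qcnj_mult)
  also have "\<dots> = qprime (\<xi> * qcnj \<eta>)"
    using assms by (metis qprime_eq_qcnj_iff)
  also have "\<dots> = qprime \<xi> * qcnj (qprime \<eta>)"
    by (simp add: qprime_mult qprime_qcnj)
  finally have "\<eta> * qcnj \<xi> * qprime \<eta> = qprime \<xi> * (qcnj (qprime \<eta>) * qprime \<eta>)"
    by (simp add: mult.assoc)
  also have "\<dots> = quat_of_real (qnorm2 \<eta>) * qprime \<xi>"
    by (simp add: qcnj_mult_self quat_of_real_commute)
  finally show ?thesis .
qed

theorem lemma3p8: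
  fixes \<xi> \<eta> :: quat
  assumes "(\<xi>, \<eta>) \<in> SH"
  shows "\<exists>\<alpha> \<beta> :: quat.
           (\<alpha> * \<xi> + \<beta> * \<eta> = 0) \<noteq> (\<alpha> * qprime \<eta> - \<beta> * qprime \<xi> = 0)"
proof (cases "\<xi> = 0")
  case True
  with assms have "\<eta> \<noteq> 0"
    by (auto simp: SH_def)
  with True have "(1 * \<xi> + 0 * \<eta> = 0) \<noteq> (1 * qprime \<eta> - 0 * qprime \<xi> = 0)"
    by simp
  then show ?thesis by blast
next
  case False
  define \<alpha> where "\<alpha> = \<eta> * qcnj \<xi>"
  define \<beta> where "\<beta> = - quat_of_real (qnorm2 \<xi>)"
  have "\<alpha> * \<xi> + \<beta> * \<eta> = 0"
    by (simp add: \<alpha>_def \<beta>_def mult.assoc qcnj_mult_self quat_of_real_commute)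
  moreover have "\<alpha> * qprime \<eta> - \<beta> * qprime \<xi> = quat_of_real (qnorm2 \<xi> + qnorm2 \<eta>) * qprime \<xi>"
    using assms mult_qcnj_mult_qprime_eq_qnorm2[of \<xi> \<eta>]
    by (simp add: SH_def \<alpha>_def \<beta>_def quat_of_real_add distrib_right)
  moreover have "qnorm2 \<xi> + qnorm2 \<eta> \<noteq> 0"
    using False qnorm2_eq_0_iff[of \<xi>] qnorm2_nonneg[of \<xi>] qnorm2_nonneg[of \<eta>] by linarith
  ultimately show ?thesis
    using False by (metis quat_of_real_mult_eq_0_iff qprime_eq_0_iff)
qed

end
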